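(* In the single-period model described in the context, with short sales prohibitions (admissible strategies satisfy $h_0\in\mathbb{R}$, $h_m\ge 0$ for $m=1,\dots,M$), if there is no arbitrage under model uncertainty, then there exists a weak risk neutral nonlinear expectation, i.e. a nonempty family $\mathcal{Q}$ of probability measures on $\Omega$ such that $\sup_{Q\in\mathcal{Q}}Q(\omega)>0$ for all $\omega\in\Omega$ and $\inf_{Q\in\mathcal{Q}}E_Q[\Delta S_m^*]\le 0$ for all $m=1,\dots,M$.
   Context: Single-period model: $\Omega=\{\omega_1,\dots,\omega_K\}$ is a finite sample space with all subsets measurable. $\mathcal{P}$ is a nonempty family of probability measures on $\Omega$ with $\sup_{P\in\mathcal{P}}P(\omega)>0$ for every $\omega\in\Omega$. There is a bond with $S_0(0)=1$, $S_0(1)=1+r$, $r\ge 0$ a constant, and $M$ risky securities with known initial prices $S_m(0)>0$ and random terminal prices $S_m(1):\Omega\to\mathbb{R}$, $m=1,\dots,M$. Discounted prices: $S_m^*(t)=S_m(t)/S_0(t)$, $t=0,1$, and $\Delta S_m^*=S_m^*(1)-S_m^*(0)$. For a trading strategy $h=(h_0,\dots,h_M)$, the discounted portfolio value is $V_t^*=h_0+\sum_{m=1}^M h_m S_m^*(t)$, $t=0,1$. A trading strategy is an arbitrage under model uncertainty if (i) $V_0^*=0$ and (ii) $V_1^*(\omega)\ge 0$ for all $\omega\in\Omega$ and $\sup_{P\in\mathcal{P}}E_P[V_1^*]>0$. "No arbitrage under model uncertainty" means no admissible trading strategy is an arbitrage under model uncertainty. *)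

theory Defs
  imports "HOL-Analysis.Analysis"
begin

text \<open>Finite sample space: a finite type 'w (all subsets measurable).
  A probability measure on it is represented by its point masses.\<close>

definition prob_measure :: "('w::finite \<Rightarrow> real) \<Rightarrow> bool" where
  "prob_measure P \<longleftrightarrow> (\<forall>w. 0 \<le> P w) \<and> (\<Sum>w\<in>UNIV. P w) = 1"

definition expect :: "('w::finite \<Rightarrow> real) \<Rightarrow> ('w \<Rightarrow> real) \<Rightarrow> real" where
  "expect P X = (\<Sum>w\<in>UNIV. P w * X w)"

text \<open>Discounted prices: S0 m = S_m(0) (bond price at 0 is 1), S1 m w = S_m(1)(w).\<close>

definition disc1 :: "real \<Rightarrow> (nat \<Rightarrow> 'w \<Rightarrow> real) \<Rightarrow> nat \<Rightarrow> 'w \<Rightarrow> real" where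
  "disc1 r S1 m w = S1 m w / (1 + r)"

definition dS :: "real \<Rightarrow> (nat \<Rightarrow> real) \<Rightarrow> (nat \<Rightarrow> 'w \<Rightarrow> real) \<Rightarrow> nat \<Rightarrow> 'w \<Rightarrow> real" where
  "dS r S0 S1 m w = disc1 r S1 m w - S0 m"

definition V0 :: "nat \<Rightarrow> (nat \<Rightarrow> real) \<Rightarrow> (nat \<Rightarrow> real) \<Rightarrow> real" where
  "V0 M S0 h = h 0 + (\<Sum>m=1..M. h m * S0 m)"

definition V1 :: "nat \<Rightarrow> real \<Rightarrow> (nat \<Rightarrow> 'w \<Rightarrow> real) \<Rightarrow> (nat \<Rightarrow> real) \<Rightarrow> 'w \<Rightarrow> real" where
  "V1 M r S1 h w = h 0 + (\<Sum>m=1..M. h m * disc1 r S1 m w)"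

definition admissible :: "nat \<Rightarrow> (nat \<Rightarrow> real) \<Rightarrow> bool" where
  "admissible M h \<longleftrightarrow> (\<forall>m\<in>{1..M}. 0 \<le> h m)"

definition arbitrage_MU ::
  "('w::finite \<Rightarrow> real) set \<Rightarrow> nat \<Rightarrow> real \<Rightarrow> (nat \<Rightarrow> real) \<Rightarrow> (nat \<Rightarrow> 'w \<Rightarrow> real) \<Rightarrow> (nat \<Rightarrow> real) \<Rightarrow> bool" where
  "arbitrage_MU \<P> M r S0 S1 h \<longleftrightarrow>
     V0 M S0 h = 0 \<and> (\<forall>w. 0 \<le> V1 M r S1 h w) \<and>
     (SUP P\<in>\<P>. expect P (V1 M r S1 h)) > 0"

definition no_arbitrage_MU ::
  "('w::finite \<Rightarrow> real) set \<Rightarrow> nat \<Rightarrow> real \<Rightarrow> (nat \<Rightarrow> real) \<Rightarrow> (nat \<Rightarrow> 'w \<Rightarrow> real) \<Rightarrow> bool" where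
  "no_arbitrage_MU \<P> M r S0 S1 \<longleftrightarrow>
     (\<forall>h. admissible M h \<longrightarrow> \<not> arbitrage_MU \<P> M r S0 S1 h)"

definition weak_risk_neutral ::
  "('w::finite \<Rightarrow> real) set \<Rightarrow> nat \<Rightarrow> real \<Rightarrow> (nat \<Rightarrow> real) \<Rightarrow> (nat \<Rightarrow> 'w \<Rightarrow> real) \<Rightarrow> bool" where
  "weak_risk_neutral \<Q> M r S0 S1 \<longleftrightarrow>
     \<Q> \<noteq> {} \<and> (\<forall>Q\<in>\<Q>. prob_measure Q) \<and>
     (\<forall>w. (SUP Q\<in>\<Q>. Q w) > 0) \<and>
     (\<forall>m\<in>{1..M}. (INF Q\<in>\<Q>. expect Q (dS r S0 S1 m)) \<le> 0)"

end

theory Submission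
  imports Defs
begin

text \<open>If some asset had a discounted increment that is strictly positive in every state,
  buying one unit of it with borrowed money would be an arbitrage under model uncertainty,
  since its expected value under any prior is then positive. So every risky asset has a
  state in which its discounted increment is nonpositive, and the family of all point
  masses is a weak risk neutral nonlinear expectation: each state carries full weight under
  its own point mass, and the infimum of the expected increments is at most the increment
  in such a state.\<close>

definition point_mass :: "'w::finite \<Rightarrow> 'w \<Rightarrow> real" where
  "point_mass w = (\<lambda>v. if v = w then 1 else 0)"

lemma prob_measure_point_mass: "prob_measure (point_mass w)"
  unfolding prob_measure_def point_mass_def by (simp add: sum.delta)

lemma expect_point_mass: "expect (point_mass w) X = X w"
  unfolding expect_def point_mass_def
  by (simp add: if_distrib[of "\<lambda>c. c * _"] sum.delta cong: if_cong)

lemma prob_measure_le_one: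
  assumes "prob_measure P"
  shows "P w \<le> 1"
proof -
  have "P w \<le> (\<Sum>v\<in>UNIV. P v)"
    by (rule member_le_sum) (use assms in \<open>auto simp: prob_measure_def\<close>)
  thus ?thesis using assms by (simp add: prob_measure_def)
qed

lemma expect_le_sum_abs:
  assumes "prob_measure P"
  shows "expect P X \<le> (\<Sum>w\<in>UNIV. \<bar>X w\<bar>)"
  unfolding expect_def
proof (rule sum_mono)
  fix w
  have nonneg: "0 \<le> P w" using assms by (simp add: prob_measure_def)
  have "P w * X w \<le> P w * \<bar>X w\<bar>" using nonneg by (simp add: mult_left_mono)
  also have "\<dots> \<le> \<bar>X w\<bar>"
    using nonneg prob_measure_le_one[OF assms] by (simp add: mult_left_le_one_le)
  finally show "P w * X w \<le> \<bar>X w\<bar>" .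
qed

lemma expect_pos:
  assumes "prob_measure P" and "\<And>w. 0 < X w"
  shows "0 < expect P X"
proof -
  have nonneg: "0 \<le> P w" for w using assms(1) by (simp add: prob_measure_def)
  obtain w0 where "P w0 \<noteq> 0"
    using assms(1) by (metis prob_measure_def sum.neutral zero_neq_one)
  with nonneg have "0 < P w0 * X w0" using assms(2) by (simp add: order_less_le)
  also have "\<dots> \<le> (\<Sum>w\<in>UNIV. P w * X w)"
    by (rule member_le_sum) (use nonneg assms(2) in \<open>simp_all add: less_imp_le\<close>)
  finally show ?thesis unfolding expect_def .
qed

lemma SUP_expect_pos:
  assumes "\<P> \<noteq> {}" and "\<forall>P\<in>\<P>. prob_measure P" and "\<And>w. 0 < X w"
  shows "0 < (SUP P\<in>\<P>. expect P X)"
proof -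
  obtain P where P: "P \<in> \<P>" using assms(1) by auto
  have "bdd_above ((\<lambda>P. expect P X) ` \<P>)"
    using assms(2) expect_le_sum_abs by (intro bdd_aboveI2) blast
  hence "expect P X \<le> (SUP P\<in>\<P>. expect P X)" by (rule cSUP_upper[OF P])
  moreover have "0 < expect P X" using P assms(2,3) expect_pos by blast
  ultimately show ?thesis by linarith
qed

definition buy_asset :: "(nat \<Rightarrow> real) \<Rightarrow> nat \<Rightarrow> nat \<Rightarrow> real" where
  "buy_asset S0 m = (\<lambda>i. if i = 0 then - S0 m else if i = m then 1 else 0)"

lemma sum_buy_asset:
  fixes f :: "nat \<Rightarrow> real"
  assumes "m \<in> {1..M}"
  shows "(\<Sum>i=1..M. buy_asset S0 m i * f i) = f m"
proof -
  have "(\<Sum>i=1..M. buy_asset S0 m i * f i) = (\<Sum>i=1..M. if i = m then f i else 0)"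
    by (rule sum.cong) (auto simp: buy_asset_def)
  also have "\<dots> = f m" using assms by (simp add: sum.delta)
  finally show ?thesis .
qed

lemma admissible_buy_asset: "admissible M (buy_asset S0 m)"
  unfolding admissible_def buy_asset_def by auto

lemma V0_buy_asset: "m \<in> {1..M} \<Longrightarrow> V0 M S0 (buy_asset S0 m) = 0"
  unfolding V0_def using sum_buy_asset[of m M S0 S0] by (simp add: buy_asset_def)

lemma V1_buy_asset: "m \<in> {1..M} \<Longrightarrow> V1 M r S1 (buy_asset S0 m) = dS r S0 S1 m"
  unfolding V1_def dS_def
  using sum_buy_asset[of m M S0 "\<lambda>i. disc1 r S1 i _"] by (simp add: buy_asset_def)

lemma no_arbitrage_imp_nonpos_increment:
  fixes \<P> :: "('w::finite \<Rightarrow> real) set"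
  assumes "\<P> \<noteq> {}" and "\<forall>P\<in>\<P>. prob_measure P"
    and "no_arbitrage_MU \<P> M r S0 S1" and m: "m \<in> {1..M}"
  shows "\<exists>w. dS r S0 S1 m w \<le> 0"
proof (rule ccontr)
  assume "\<nexists>w. dS r S0 S1 m w \<le> 0"
  hence pos: "0 < dS r S0 S1 m w" for w by (meson not_le)
  have "arbitrage_MU \<P> M r S0 S1 (buy_asset S0 m)"
    unfolding arbitrage_MU_def V0_buy_asset[OF m] V1_buy_asset[OF m]
    using SUP_expect_pos[OF assms(1,2) pos] pos by (simp add: less_imp_le)
  thus False
    using assms(3) admissible_buy_asset unfolding no_arbitrage_MU_def by blast
qed

lemma SUP_point_mass_pos: "0 < (SUP Q\<in>range point_mass. Q w)"
proof -
  have bdd: "bdd_above ((\<lambda>Q. Q w) ` range point_mass)"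
    by (rule bdd_aboveI2[where M=1]) (auto simp: point_mass_def)
  have "point_mass w w \<le> (SUP Q\<in>range point_mass. Q w)"
    by (rule cSUP_upper[OF _ bdd]) simp
  thus ?thesis by (simp add: point_mass_def)
qed

lemma INF_expect_point_mass_le: "(INF Q\<in>range point_mass. expect Q X) \<le> X w"
proof -
  have "finite ((\<lambda>Q. expect Q X) ` range point_mass)"
    by (rule finite_imageI)+ (rule finite)
  hence "(INF Q\<in>range point_mass. expect Q X) \<le> expect (point_mass w) X"
    by (rule cINF_lower[OF bdd_below_finite rangeI])
  thus ?thesis by (simp only: expect_point_mass)
qed

lemma weak_risk_neutral_point_masses:
  fixes S1 :: "nat \<Rightarrow> 'w::finite \<Rightarrow> real"
  assumes "\<forall>m\<in>{1..M}. \<exists>w. dS r S0 S1 m w \<le> 0"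
  shows "weak_risk_neutral (range point_mass) M r S0 S1"
  unfolding weak_risk_neutral_def
proof (intro conjI ballI allI)
  show "range point_mass \<noteq> {}" by simp
  show "prob_measure Q" if "Q \<in> range point_mass" for Q :: "'w \<Rightarrow> real"
    using that prob_measure_point_mass by auto
  show "0 < (SUP Q\<in>range point_mass. Q w)" for w :: 'w
    by (rule SUP_point_mass_pos)
  show "(INF Q\<in>range point_mass. expect Q (dS r S0 S1 m)) \<le> 0" if "m \<in> {1..M}" for m
    using assms that INF_expect_point_mass_le order_trans by metis
qed

theorem mainTheorem3:
  fixes \<P> :: "('w::finite \<Rightarrow> real) set"
    and M :: nat and r :: real
    and S0 :: "nat \<Rightarrow> real" and S1 :: "nat \<Rightarrow> 'w \<Rightarrow> real"
  assumes "\<P> \<noteq> {}"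
    and "\<forall>P\<in>\<P>. prob_measure P"
    and "\<forall>w. (SUP P\<in>\<P>. P w) > 0"
    and "r \<ge> 0"
    and "\<forall>m\<in>{1..M}. S0 m > 0"
    and "no_arbitrage_MU \<P> M r S0 S1"
  shows "\<exists>\<Q>. weak_risk_neutral \<Q> M r S0 S1"
proof -
  have "\<forall>m\<in>{1..M}. \<exists>w. dS r S0 S1 m w \<le> 0"
    using no_arbitrage_imp_nonpos_increment[OF assms(1,2,6)] by blast
  thus ?thesis using weak_risk_neutral_point_masses by blast
qed

end
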